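(* Let $T$ be a $C_{p^rq^s}$-transfer system. Then the connected component of $(r,s)$ in $T$ is a rectangle, i.e., equals $\{(i,j): a\le i\le r,\ b\le j\le s\}$ for some vertex $(a,b)$.
   Context: $p,q$ are distinct primes and $r,s\ge 0$ integers. The subgroups of $C_{p^rq^s}$ are identified with grid points $(i,j)$, $0\le i\le r$, $0\le j\le s$, where $(i,j)$ stands for $C_{p^iq^j}$. A $C_{p^rq^s}$-transfer system is a partial order $\to$ on these vertices such that: $(i_1,j_1)\to(i_2,j_2)$ implies $i_1\le i_2$, $j_1\le j_2$; it is reflexive and transitive; and $(i_1,j_1)\to(i_2,j_2)$ implies $(\min\{i_1,a\},\min\{j_1,b\})\to(\min\{i_2,a\},\min\{j_2,b\})$ for every vertex $(a,b)$. Connected components are those of the underlying undirected graph. *)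

theory Defs
  imports "HOL-Computational_Algebra.Primes"
begin

text \<open>Subgroups of the cyclic group of order p^r q^s are identified with grid points
  (i,j), 0 <= i <= r, 0 <= j <= s.\<close>

definition grid :: "nat \<Rightarrow> nat \<Rightarrow> (nat \<times> nat) set" where
  "grid r s = {(i, j). i \<le> r \<and> j \<le> s}"

text \<open>A transfer system: a partial order on the grid vertices, refining the product
  order, closed under restriction (componentwise min with any vertex).\<close>

definition transfer_system :: "nat \<Rightarrow> nat \<Rightarrow> (nat \<times> nat \<Rightarrow> nat \<times> nat \<Rightarrow> bool) \<Rightarrow> bool" where
  "transfer_system r s T \<longleftrightarrow>
     (\<forall>x y. T x y \<longrightarrow> x \<in> grid r s \<and> y \<in> grid r s) \<and>
     (\<forall>x\<in>grid r s. T x x) \<and>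
     (\<forall>x y z. T x y \<longrightarrow> T y z \<longrightarrow> T x z) \<and>
     (\<forall>x y. T x y \<longrightarrow> T y x \<longrightarrow> x = y) \<and>
     (\<forall>i1 j1 i2 j2. T (i1, j1) (i2, j2) \<longrightarrow> i1 \<le> i2 \<and> j1 \<le> j2) \<and>
     (\<forall>i1 j1 i2 j2 a b. T (i1, j1) (i2, j2) \<longrightarrow> (a, b) \<in> grid r s \<longrightarrow>
        T (min i1 a, min j1 b) (min i2 a, min j2 b))"

definition component :: "(nat \<times> nat \<Rightarrow> nat \<times> nat \<Rightarrow> bool) \<Rightarrow> nat \<times> nat \<Rightarrow> (nat \<times> nat) set" where
  "component T v = {w. (\<lambda>x y. T x y \<or> T y x)\<^sup>*\<^sup>* v w}"

end

theory Submission
  imports Defs "HOL-Library.Product_Order"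
begin

text \<open>Order the grid componentwise, so that restricting along a vertex v is taking the meet
  with v. Restriction maps edges of a transfer system to edges, hence zigzag paths to zigzag
  paths. Restricting a path from the top (r,s) to u along another vertex w of its component gives
  a path from w to the meet of u and w, so the component is closed under meets and contains its
  least element m. Restricting a path from the top to m along any x between m and the top gives a
  path from x to m, so the component is the whole interval from m to the top.\<close>

lemma Inf_fin_mem_if_inf_closed:
  assumes "finite A" and "A \<noteq> {}" and closed: "\<And>x y. x \<in> A \<Longrightarrow> y \<in> A \<Longrightarrow> inf x y \<in> A"
  shows "Inf_fin A \<in> A"
proof -
  have "B \<subseteq> A \<Longrightarrow> Inf_fin B \<in> A" if "finite B" "B \<noteq> {}" for B
    using that by (induction rule: finite_ne_induct) (simp_all add: closed)
  then show ?thesis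
    using assms(1,2) by blast
qed

lemma mem_component_iff: "w \<in> component T v \<longleftrightarrow> (symclp T)\<^sup>*\<^sup>* v w"
  by (simp add: component_def symclp_def [abs_def])

lemma grid_eq_atMost: "grid r s = {..(r, s)}"
  by (auto simp: grid_def)

lemma finite_grid: "finite (grid r s)"
proof -
  have "grid r s = {..r} \<times> {..s}"
    by (auto simp: grid_def)
  then show ?thesis
    by simp
qed

lemma transfer_system_inf:
  assumes "transfer_system r s T" and "T x y" and "v \<in> grid r s"
  shows "T (inf x v) (inf y v)"
proof -
  obtain i1 j1 i2 j2 a b where "x = (i1, j1)" "y = (i2, j2)" "v = (a, b)"
    by (metis prod.collapse)
  with assms show ?thesis
    unfolding transfer_system_def by (simp add: inf_min)
qed

lemma transfer_system_path_inf:
  assumes "transfer_system r s T" and "v \<in> grid r s"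
    and "(symclp T)\<^sup>*\<^sup>* x y"
  shows "(symclp T)\<^sup>*\<^sup>* (inf x v) (inf y v)"
  using assms(3)
proof (induction rule: rtranclp_induct)
  case (step y z)
  then have "symclp T (inf y v) (inf z v)"
    using transfer_system_inf [OF assms(1) _ assms(2), of y z]
      transfer_system_inf [OF assms(1) _ assms(2), of z y]
    by (auto simp: symclp_def)
  with step.IH show ?case
    by (rule rtranclp.rtrancl_into_rtrancl)
qed simp

lemma component_subset_grid:
  assumes "transfer_system r s T"
  shows "component T (r, s) \<subseteq> grid r s"
proof
  fix w assume "w \<in> component T (r, s)"
  then have "(symclp T)\<^sup>*\<^sup>* (r, s) w"
    by (simp add: mem_component_iff)
  then show "w \<in> grid r s"
  proof (induction rule: rtranclp_induct)
    case base
    then show ?case by (simp add: grid_def)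
  next
    case (step y z)
    then show ?case
      using assms unfolding transfer_system_def symclp_def by blast
  qed
qed

lemma self_in_component: "v \<in> component T v"
  by (simp add: mem_component_iff)

lemma component_inf_closed:
  assumes ts: "transfer_system r s T"
    and u: "u \<in> component T (r, s)" and w: "w \<in> component T (r, s)"
  shows "inf u w \<in> component T (r, s)"
proof -
  have w_grid: "w \<le> (r, s)"
    using component_subset_grid[OF ts] w by (auto simp: grid_eq_atMost)
  have "(symclp T)\<^sup>*\<^sup>* (inf (r, s) w) (inf u w)"
    using transfer_system_path_inf[OF ts] u w_grid by (simp add: grid_eq_atMost mem_component_iff)
  then have "(symclp T)\<^sup>*\<^sup>* w (inf u w)"
    using w_grid by (simp add: inf_absorb2)
  with w show ?thesis
    by (simp add: mem_component_iff)
qed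

lemma component_upward_closed:
  assumes ts: "transfer_system r s T"
    and u: "u \<in> component T (r, s)" and "u \<le> x" and "x \<le> (r, s)"
  shows "x \<in> component T (r, s)"
proof -
  have "(symclp T)\<^sup>*\<^sup>* (inf (r, s) x) (inf u x)"
    using transfer_system_path_inf[OF ts] u assms(4) by (simp add: grid_eq_atMost mem_component_iff)
  then have "(symclp T)\<^sup>*\<^sup>* x u"
    using assms(3,4) by (simp add: inf_absorb1 inf_absorb2)
  then have "(symclp T)\<^sup>*\<^sup>* u x"
    by (rule sympD [OF symp_rtranclp_symclp])
  with u show ?thesis
    by (simp add: mem_component_iff)
qed

lemma component_top_eq_atLeastAtMost:
  assumes ts: "transfer_system r s T"
  shows "component T (r, s) = {Inf_fin (component T (r, s))..(r, s)}"
proof -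
  let ?C = "component T (r, s)"
  have finite: "finite ?C"
    using component_subset_grid [OF ts] finite_grid by (rule finite_subset)
  have "?C \<noteq> {}"
    using self_in_component by blast
  with finite have least_mem: "Inf_fin ?C \<in> ?C"
    using component_inf_closed [OF ts] by (rule Inf_fin_mem_if_inf_closed)
  show ?thesis
  proof (intro equalityI subsetI)
    fix x assume "x \<in> ?C"
    then show "x \<in> {Inf_fin ?C..(r, s)}"
      using finite component_subset_grid [OF ts]
      by (auto simp: grid_eq_atMost intro: Inf_fin.coboundedI)
  next
    fix x assume "x \<in> {Inf_fin ?C..(r, s)}"
    then show "x \<in> ?C"
      using component_upward_closed [OF ts least_mem] by simp
  qed
qed

theorem mainTheorem10:
  fixes p q r s :: nat
    and T :: "nat \<times> nat \<Rightarrow> nat \<times> nat \<Rightarrow> bool"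
  assumes "prime p" and "prime q" and "p \<noteq> q"
    and "transfer_system r s T"
  shows "\<exists>a b. a \<le> r \<and> b \<le> s \<and>
           component T (r, s) = {(i, j). a \<le> i \<and> i \<le> r \<and> b \<le> j \<and> j \<le> s}"
proof -
  let ?C = "component T (r, s)"
  obtain a b where ab: "Inf_fin ?C = (a, b)"
    by (cases "Inf_fin ?C")
  have C_eq: "?C = {(a, b)..(r, s)}"
    using component_top_eq_atLeastAtMost [OF assms(4)] ab by simp
  then have "a \<le> r \<and> b \<le> s"
    using self_in_component [of "(r, s)" T] by (metis Pair_le atLeastAtMost_iff)
  moreover have "{(a, b)..(r, s)} = {(i, j). a \<le> i \<and> i \<le> r \<and> b \<le> j \<and> j \<le> s}"
    by auto
  ultimately show ?thesis
    using C_eq by auto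
qed

end
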